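(* Let $f:X\to X$ be a continuous map of a compact metric space $(X,d)$. If there exists $\delta>0$ such that $B(\gamma(Sh(f)),\delta)\subset R(f)$, then $Sh(f)\subset X^{deg}$.
   Context: A $\delta$-pseudo-orbit of $f$ is $\{x_i\}_{i\ge0}$ with $d(f(x_i),x_{i+1})<\delta$ for all $i$; it is $\varepsilon$-shadowed by $z$ if $d(f^i(z),x_i)<\varepsilon$ for all $i\ge0$. $Sh(f)$ is the set of $x\in X$ such that for every $\varepsilon>0$ there is $\delta>0$ such that every $\delta$-pseudo-orbit with $x_0=x$ is $\varepsilon$-shadowed by some point of $X$. $R(f)$ is the set of recurrent points: $x$ such that $f^{n_i}(x)\to x$ for some increasing sequence of positive integers $n_i$. $X^{deg}$ is the set of $p\in X$ whose connected component in $X$ is $\{p\}$. For $A\subset X$, $\gamma(A)$ is the union of all connected components of $X$ that meet $A$, and $B(A,\delta)=\{y\in X: d(y,A)<\delta\}$. *)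

theory Defs
  imports "HOL-Analysis.Analysis"
begin

definition pseudo_orbit :: "'a::metric_space set \<Rightarrow> ('a \<Rightarrow> 'a) \<Rightarrow> real \<Rightarrow> (nat \<Rightarrow> 'a) \<Rightarrow> bool" where
  "pseudo_orbit X f \<delta> xs \<longleftrightarrow> (\<forall>i. xs i \<in> X) \<and> (\<forall>i. dist (f (xs i)) (xs (Suc i)) < \<delta>)"

definition shadowed :: "'a::metric_space set \<Rightarrow> ('a \<Rightarrow> 'a) \<Rightarrow> real \<Rightarrow> (nat \<Rightarrow> 'a) \<Rightarrow> bool" where
  "shadowed X f \<epsilon> xs \<longleftrightarrow> (\<exists>z\<in>X. \<forall>i. dist ((f ^^ i) z) (xs i) < \<epsilon>)"

definition Sh :: "'a::metric_space set \<Rightarrow> ('a \<Rightarrow> 'a) \<Rightarrow> 'a set" where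
  "Sh X f = {x \<in> X. \<forall>\<epsilon>>0. \<exists>\<delta>>0. \<forall>xs. pseudo_orbit X f \<delta> xs \<and> xs 0 = x \<longrightarrow> shadowed X f \<epsilon> xs}"

definition recurrent_points :: "'a::metric_space set \<Rightarrow> ('a \<Rightarrow> 'a) \<Rightarrow> 'a set" where
  "recurrent_points X f = {x \<in> X. \<exists>n::nat \<Rightarrow> nat. strict_mono n \<and> n 0 > 0 \<and>
      (\<lambda>i. (f ^^ (n i)) x) \<longlonglongrightarrow> x}"

definition degenerate_points :: "'a::metric_space set \<Rightarrow> 'a set" where
  "degenerate_points X = {p \<in> X. connected_component_set X p = {p}}"

definition comp_hull :: "'a::metric_space set \<Rightarrow> 'a set \<Rightarrow> 'a set" where
  "comp_hull X A = \<Union>{C. C \<in> components X \<and> C \<inter> A \<noteq> {}}"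

definition nbhd :: "'a::metric_space set \<Rightarrow> 'a set \<Rightarrow> real \<Rightarrow> 'a set" where
  "nbhd X A \<delta> = {y \<in> X. \<exists>a\<in>A. dist y a < \<delta>}"

end

theory Submission
  imports Defs
begin

text \<open>Let \<open>x\<close> be a shadowing point whose component \<open>C\<close> has a neighbourhood of recurrent
  points, and suppose \<open>C\<close> contains a point \<open>p \<noteq> x\<close>. Since \<open>C\<close> is connected and consists of
  recurrent points, any two of its points are joined by \<open>\<delta>\<close>-chains, even by chains whose length
  is a multiple of the length \<open>n\<close> of a fixed \<open>\<delta>\<close>-loop at \<open>x\<close>. This yields a \<open>\<delta>\<close>-pseudo-orbit \<open>P\<close>
  with \<open>P 0 = x\<close>, \<open>P t = p\<close> and \<open>P (m + t) = P m\<close> for all large \<open>m\<close>. Its shadowing point \<open>z\<close> lies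
  near \<open>x\<close>, hence is recurrent, and at a large return time \<open>m\<close> of \<open>z\<close> both \<open>f\<^sup>m z \<approx> z \<approx> x\<close> and
  \<open>f\<^sup>m\<^sup>+\<^sup>t z \<approx> f\<^sup>t z \<approx> p\<close> shadow the same point \<open>P m = P (m + t)\<close>. So \<open>x\<close> and \<open>p\<close> are arbitrarily
  close.\<close>

definition pseudo_chain :: "'a::metric_space set \<Rightarrow> ('a \<Rightarrow> 'a) \<Rightarrow> real \<Rightarrow> nat \<Rightarrow> (nat \<Rightarrow> 'a) \<Rightarrow> bool" where
  "pseudo_chain X f \<delta> t s \<longleftrightarrow> (\<forall>i\<le>t. s i \<in> X) \<and> (\<forall>i<t. dist (f (s i)) (s (Suc i)) < \<delta>)"

definition chain_between :: "'a::metric_space set \<Rightarrow> ('a \<Rightarrow> 'a) \<Rightarrow> real \<Rightarrow> nat \<Rightarrow> 'a \<Rightarrow> 'a \<Rightarrow> bool" where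
  "chain_between X f \<delta> t a b \<longleftrightarrow> (\<exists>s. pseudo_chain X f \<delta> t s \<and> s 0 = a \<and> s t = b)"

definition chain_append :: "nat \<Rightarrow> (nat \<Rightarrow> 'a) \<Rightarrow> (nat \<Rightarrow> 'a) \<Rightarrow> nat \<Rightarrow> 'a" where
  "chain_append t s s' i = (if i \<le> t then s i else s' (i - t))"

lemma chain_append_le [simp]: "i \<le> t \<Longrightarrow> chain_append t s s' i = s i"
  by (simp add: chain_append_def)

lemma chain_append_add: "s' 0 = s t \<Longrightarrow> chain_append t s s' (t + i) = s' i"
  by (simp add: chain_append_def)

lemma pseudo_chain_mono: "pseudo_chain X f \<delta> t s \<Longrightarrow> k \<le> t \<Longrightarrow> pseudo_chain X f \<delta> k s"
  by (simp add: pseudo_chain_def)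

lemma pseudo_orbit_iff_pseudo_chains: "pseudo_orbit X f \<delta> xs \<longleftrightarrow> (\<forall>t. pseudo_chain X f \<delta> t xs)"
  unfolding pseudo_orbit_def pseudo_chain_def by (meson le_refl lessI)

lemma pseudo_chain_append:
  assumes "pseudo_chain X f \<delta> t s" "pseudo_chain X f \<delta> u s'" "s' 0 = s t"
  shows "pseudo_chain X f \<delta> (t + u) (chain_append t s s')"
  unfolding pseudo_chain_def
proof (intro conjI allI impI)
  fix i
  show "i \<le> t + u \<Longrightarrow> chain_append t s s' i \<in> X"
    using assms(1,2) by (auto simp: pseudo_chain_def chain_append_def)
  assume i: "i < t + u"
  show "dist (f (chain_append t s s' i)) (chain_append t s s' (Suc i)) < \<delta>"
  proof (cases "i < t")
    case True
    then show ?thesis using assms(1) by (simp add: pseudo_chain_def)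
  next
    case False
    then obtain j where j: "i = t + j" "j < u" using i le_Suc_ex by (metis add_less_cancel_left not_less)
    then have "chain_append t s s' i = s' j" "chain_append t s s' (Suc i) = s' (Suc j)"
      using assms(3) by (simp_all add: chain_append_def)
    then show ?thesis using assms(2) j(2) by (simp add: pseudo_chain_def)
  qed
qed

lemma pseudo_orbit_append:
  assumes "pseudo_chain X f \<delta> t s" "pseudo_orbit X f \<delta> xs" "xs 0 = s t"
  shows "pseudo_orbit X f \<delta> (chain_append t s xs)"
  unfolding pseudo_orbit_iff_pseudo_chains
proof
  fix u
  have "pseudo_chain X f \<delta> (t + u) (chain_append t s xs)"
    using pseudo_chain_append assms pseudo_orbit_iff_pseudo_chains by blast
  then show "pseudo_chain X f \<delta> u (chain_append t s xs)"
    by (rule pseudo_chain_mono) simp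
qed

lemma pseudo_orbit_cycle:
  assumes "pseudo_chain X f \<delta> n s" "s n = s 0" "n > 0"
  shows "pseudo_orbit X f \<delta> (\<lambda>i. s (i mod n))"
  unfolding pseudo_orbit_def
proof (intro conjI allI)
  fix i
  have i: "i mod n < n" using assms(3) by simp
  then show "s (i mod n) \<in> X" using assms(1) by (simp add: pseudo_chain_def)
  have "s (Suc i mod n) = s (Suc (i mod n))"
    using assms(2) i by (simp add: mod_Suc)
  then show "dist (f (s (i mod n))) (s (Suc i mod n)) < \<delta>"
    using assms(1) i by (simp add: pseudo_chain_def)
qed

lemma chain_betweenE:
  assumes "chain_between X f \<delta> t a b"
  obtains s where "pseudo_chain X f \<delta> t s" "s 0 = a" "s t = b"
  using assms unfolding chain_between_def by (elim exE conjE) (rule that)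

lemma chain_between_refl: "a \<in> X \<Longrightarrow> chain_between X f \<delta> 0 a a"
  unfolding chain_between_def pseudo_chain_def by (rule exI[of _ "\<lambda>_. a"]) simp

lemma chain_between_trans:
  assumes "chain_between X f \<delta> t a b" "chain_between X f \<delta> u b c"
  shows "chain_between X f \<delta> (t + u) a c"
proof -
  obtain s where "pseudo_chain X f \<delta> t s" "s 0 = a" "s t = b"
    using assms(1) by (rule chain_betweenE)
  moreover obtain s' where "pseudo_chain X f \<delta> u s'" "s' 0 = b" "s' u = c"
    using assms(2) by (rule chain_betweenE)
  ultimately show ?thesis
    unfolding chain_between_def
    by (intro exI[of _ "chain_append t s s'"]) (simp add: pseudo_chain_append chain_append_add)
qed

lemma chain_between_power:
  assumes "chain_between X f \<delta> t a a" "a \<in> X"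
  shows "chain_between X f \<delta> (k * t) a a"
proof (induction k)
  case (Suc k)
  then show ?case using chain_between_trans[OF assms(1) Suc.IH] by (simp only: mult_Suc)
qed (simp add: chain_between_refl assms(2))

lemma chain_between_perturb_end:
  assumes "chain_between X f \<delta> (Suc t) a b"
  shows "\<exists>r>0. \<forall>y\<in>X. dist y b < r \<longrightarrow> chain_between X f \<delta> (Suc t) a y"
proof -
  obtain s where s: "pseudo_chain X f \<delta> (Suc t) s" "s 0 = a" "s (Suc t) = b"
    using assms by (rule chain_betweenE)
  define q where "q = dist (f (s t)) b"
  have "q < \<delta>" using s(1,3) unfolding q_def pseudo_chain_def by auto
  moreover have "chain_between X f \<delta> (Suc t) a y" if "y \<in> X" "dist y b < \<delta> - q" for y
  proof -
    have "dist (f (s t)) y < \<delta>"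
      using dist_triangle[of "f (s t)" y b] that(2) by (simp add: q_def dist_commute)
    then have "pseudo_chain X f \<delta> (Suc t) (s(Suc t := y))"
      using s(1) that(1) unfolding pseudo_chain_def by (auto simp: less_Suc_eq)
    then show ?thesis
      unfolding chain_between_def using s(2) by (intro exI[of _ "s(Suc t := y)"]) simp
  qed
  ultimately show ?thesis by (intro exI[of _ "\<delta> - q"]) auto
qed

lemma funpow_image_subset: "f ` X \<subseteq> X \<Longrightarrow> (f ^^ n) ` X \<subseteq> X"
  by (induction n) auto

lemma continuous_on_funpow:
  assumes "continuous_on X f" "f ` X \<subseteq> X"
  shows "continuous_on X (f ^^ n)"
proof (induction n)
  case (Suc n)
  have "continuous_on ((f ^^ n) ` X) f"
    using continuous_on_subset[OF assms(1) funpow_image_subset[OF assms(2)]] .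
  then show ?case unfolding funpow.simps(2) by (rule continuous_on_compose[OF Suc.IH])
qed simp

lemma chain_between_orbit:
  assumes "a \<in> X" "b \<in> X" "f ` X \<subseteq> X" "\<delta> > 0" "k \<ge> 1" "dist ((f ^^ k) a) b < \<delta>"
  shows "chain_between X f \<delta> k a b"
proof -
  define s where "s i = (if i < k then (f ^^ i) a else b)" for i
  have "dist (f (s i)) (s (Suc i)) < \<delta>" if "i < k" for i
  proof -
    have fs: "f (s i) = (f ^^ Suc i) a" using that by (simp add: s_def)
    show ?thesis
    proof (cases "Suc i < k")
      case True
      then show ?thesis unfolding fs using assms(4) by (simp add: s_def del: funpow.simps)
    next
      case False
      then have "Suc i = k" using that by simp
      then have "s (Suc i) = b" "(f ^^ Suc i) a = (f ^^ k) a" by (simp_all add: s_def)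
      then show ?thesis unfolding fs using assms(6) by simp
    qed
  qed
  then have "pseudo_chain X f \<delta> k s"
    unfolding pseudo_chain_def using assms(1,2) funpow_image_subset[OF assms(3)] by (auto simp: s_def)
  then show ?thesis
    unfolding chain_between_def using assms(5) by (intro exI[of _ s]) (simp add: s_def)
qed

lemma recurrent_pointsD:
  assumes "y \<in> recurrent_points X f" "\<eta> > 0"
  shows "\<exists>k\<ge>1. dist ((f ^^ k) y) y < \<eta>"
proof -
  obtain r :: "nat \<Rightarrow> nat" where r: "strict_mono r" "r 0 > 0" "(\<lambda>i. (f ^^ r i) y) \<longlonglongrightarrow> y"
    using assms(1) unfolding recurrent_points_def by blast
  then obtain j where "dist ((f ^^ r j) y) y < \<eta>"
    using assms(2) unfolding tendsto_iff eventually_sequentially by blast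
  moreover have "r j \<ge> 1"
    using r(1,2) strict_mono_less_eq[of r 0 j] by simp
  ultimately show ?thesis by blast
qed

lemma chain_between_shift_end:
  assumes "chain_between X f \<delta> t a b" "chain_between X f \<delta> l b a"
    and "chain_between X f \<delta> s a b" "chain_between X f \<delta> s a b'" "a \<in> X"
  shows "chain_between X f \<delta> (t + Suc k * (s + l)) a b'"
proof -
  have "chain_between X f \<delta> (t + l) a a"
    using assms(1,2) by (rule chain_between_trans)
  moreover have "chain_between X f \<delta> (k * (s + l)) a a"
    using chain_between_trans[OF assms(3,2)] assms(5) by (rule chain_between_power)
  ultimately have "chain_between X f \<delta> ((t + l) + k * (s + l)) a a"
    by (rule chain_between_trans)
  then have "chain_between X f \<delta> ((t + l) + k * (s + l) + s) a b'"
    using assms(4) by (rule chain_between_trans)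
  moreover have "(t + l) + k * (s + l) + s = t + Suc k * (s + l)" by simp
  ultimately show ?thesis by simp
qed

lemma recurrent_points_subset: "recurrent_points X f \<subseteq> X"
  by (auto simp: recurrent_points_def)

lemma chain_between_recurrent_neighbour:
  assumes "y \<in> recurrent_points X f" "y' \<in> X" "f ` X \<subseteq> X" "dist y y' < \<delta> / 2"
  shows "\<exists>k\<ge>1. chain_between X f \<delta> k y y'"
proof -
  have "\<delta> > 0" using assms(4) zero_le_dist[of y y'] by linarith
  then obtain k where k: "k \<ge> 1" "dist ((f ^^ k) y) y < \<delta> / 2"
    using recurrent_pointsD[OF assms(1), of "\<delta> / 2"] by auto
  then have "dist ((f ^^ k) y) y' < \<delta>"
    using dist_triangle[of "(f ^^ k) y" y' y] assms(4) by simp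
  moreover have "y \<in> X" using assms(1) recurrent_points_subset by blast
  ultimately have "chain_between X f \<delta> k y y'"
    using chain_between_orbit[OF _ assms(2,3) \<open>\<delta> > 0\<close> k(1)] by blast
  then show ?thesis using k(1) by blast
qed

text \<open>Reachability from \<open>a\<close> propagates along the connected set because every recurrent
  point reaches each point closer than \<open>\<delta>/2\<close> by following its own orbit.\<close>

lemma chain_between_recurrent_connected:
  assumes "connected C" "C \<subseteq> recurrent_points X f" "f ` X \<subseteq> X" "\<delta> > 0" "a \<in> C" "b \<in> C"
  shows "\<exists>t\<ge>1. chain_between X f \<delta> t a b"
proof (rule connected_induction_simple[OF assms(1,5,6), where P = "\<lambda>y. \<exists>t\<ge>1. chain_between X f \<delta> t a y"])
  have CX: "C \<subseteq> X" using assms(2) recurrent_points_subset by (rule order_trans)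
  have step: "\<exists>t\<ge>1. chain_between X f \<delta> t a y'"
    if reach: "\<exists>t\<ge>1. chain_between X f \<delta> t a y"
      and yy': "y \<in> C" "y' \<in> C" and close: "dist y y' < \<delta> / 2"
    for y y'
  proof -
    have "y \<in> recurrent_points X f" "y' \<in> X" using yy' assms(2) CX by auto
    then obtain k where k: "chain_between X f \<delta> k y y'"
      using chain_between_recurrent_neighbour[OF _ _ assms(3) close] by blast
    obtain t where "t \<ge> 1" "chain_between X f \<delta> t a y" using reach by blast
    then show ?thesis using chain_between_trans[OF _ k] le_add1 order_trans by blast
  qed
  have "a \<in> recurrent_points X f" "a \<in> X" "dist a a < \<delta> / 2"
    using assms(2,4,5) CX by auto
  then show "\<exists>t\<ge>1. chain_between X f \<delta> t a a"
    by (rule chain_between_recurrent_neighbour[OF _ _ assms(3)])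
  fix c assume "c \<in> C"
  show "\<exists>T. openin (top_of_set C) T \<and> c \<in> T \<and>
      (\<forall>y\<in>T. \<forall>y'\<in>T. (\<exists>t\<ge>1. chain_between X f \<delta> t a y) \<longrightarrow> (\<exists>t\<ge>1. chain_between X f \<delta> t a y'))"
  proof (rule exI[of _ "C \<inter> ball c (\<delta> / 4)"], intro conjI ballI impI)
    show "openin (top_of_set C) (C \<inter> ball c (\<delta> / 4))" by (simp add: openin_open_Int)
    show "c \<in> C \<inter> ball c (\<delta> / 4)" using \<open>c \<in> C\<close> assms(4) by simp
    fix y y' assume y: "y \<in> C \<inter> ball c (\<delta> / 4)" and y': "y' \<in> C \<inter> ball c (\<delta> / 4)"
      and "\<exists>t\<ge>1. chain_between X f \<delta> t a y"
    moreover have "dist y y' < \<delta> / 2"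
      using y y' dist_triangle[of y y' c] by (simp add: dist_commute)
    ultimately show "\<exists>t\<ge>1. chain_between X f \<delta> t a y'" using step by simp
  qed
qed

text \<open>The same propagation works for lengths divisible by \<open>n\<close>: near a point \<open>c\<close> reached in
  exactly \<open>s\<close> steps, going around the loop \<open>a \<leadsto> y \<leadsto> a\<close> \<open>n\<close> times changes the length by a
  multiple of \<open>n\<close>.\<close>

lemma chain_between_dvd_recurrent_connected:
  assumes "connected C" "C \<subseteq> recurrent_points X f" "f ` X \<subseteq> X" "\<delta> > 0" "a \<in> C" "b \<in> C"
    and "n \<ge> 1"
  shows "\<exists>t. n dvd t \<and> chain_between X f \<delta> t a b"
proof (rule connected_induction_simple[OF assms(1,5,6), where P = "\<lambda>y. \<exists>t. n dvd t \<and> chain_between X f \<delta> t a y"])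
  have CX: "C \<subseteq> X" using assms(2) recurrent_points_subset by (rule order_trans)
  obtain k where n: "n = Suc k" using assms(7) by (cases n) auto
  show "\<exists>t. n dvd t \<and> chain_between X f \<delta> t a a"
    using chain_between_refl assms(5) CX by blast
  fix c assume "c \<in> C"
  then obtain t1 where "t1 \<ge> 1" "chain_between X f \<delta> t1 a c"
    using chain_between_recurrent_connected[OF assms(1-5)] by blast
  then obtain s where "chain_between X f \<delta> (Suc s) a c" by (cases t1) auto
  then obtain r where r: "r > 0" "\<And>y. y \<in> X \<Longrightarrow> dist y c < r \<Longrightarrow> chain_between X f \<delta> (Suc s) a y"
    using chain_between_perturb_end by blast
  show "\<exists>T. openin (top_of_set C) T \<and> c \<in> T \<and>
      (\<forall>y\<in>T. \<forall>y'\<in>T. (\<exists>t. n dvd t \<and> chain_between X f \<delta> t a y) \<longrightarrow> (\<exists>t. n dvd t \<and> chain_between X f \<delta> t a y'))"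
  proof (rule exI[of _ "C \<inter> ball c r"], intro conjI ballI impI)
    show "openin (top_of_set C) (C \<inter> ball c r)" by (simp add: openin_open_Int)
    show "c \<in> C \<inter> ball c r" using \<open>c \<in> C\<close> r(1) by simp
    fix y y' assume y: "y \<in> C \<inter> ball c r" and y': "y' \<in> C \<inter> ball c r"
      and "\<exists>t. n dvd t \<and> chain_between X f \<delta> t a y"
    then obtain t where t: "n dvd t" "chain_between X f \<delta> t a y" by blast
    obtain l where l: "chain_between X f \<delta> l y a"
      using chain_between_recurrent_connected[OF assms(1-4)] y assms(5) by blast
    have "chain_between X f \<delta> (Suc s) a y" "chain_between X f \<delta> (Suc s) a y'"
      using r(2) y y' CX by (auto simp: dist_commute)
    then have "chain_between X f \<delta> (t + n * (Suc s + l)) a y'"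
      unfolding n using chain_between_shift_end[OF t(2) l] assms(5) CX by blast
    moreover have "n dvd t + n * (Suc s + l)" using t(1) by simp
    ultimately show "\<exists>t. n dvd t \<and> chain_between X f \<delta> t a y'" by blast
  qed
qed

lemma eventually_periodic_pseudo_orbit:
  assumes "chain_between X f \<delta> t a b" "chain_between X f \<delta> l b a" "chain_between X f \<delta> n a a"
    and "n > 0" "n dvd t"
  obtains P where "pseudo_orbit X f \<delta> P" "P 0 = a" "P t = b" "\<And>m. m \<ge> t + l \<Longrightarrow> P (m + t) = P m"
proof -
  obtain s1 where s1: "pseudo_chain X f \<delta> t s1" "s1 0 = a" "s1 t = b"
    using assms(1) by (rule chain_betweenE)
  obtain s2 where s2: "pseudo_chain X f \<delta> l s2" "s2 0 = b" "s2 l = a"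
    using assms(2) by (rule chain_betweenE)
  obtain s3 where s3: "pseudo_chain X f \<delta> n s3" "s3 0 = a" "s3 n = a"
    using assms(3) by (rule chain_betweenE)
  define w where "w = chain_append t s1 s2"
  have glue: "s2 0 = s1 t" using s1(3) s2(2) by simp
  have w: "pseudo_chain X f \<delta> (t + l) w" "w 0 = a" "w t = b" "w (t + l) = a"
    unfolding w_def
    by (rule pseudo_chain_append[OF s1(1) s2(1) glue], simp_all add: s1(2,3) s2(3)
        chain_append_add[of s2 s1 t l, OF glue])
  define P where "P = chain_append (t + l) w (\<lambda>i. s3 (i mod n))"
  have P_tail: "P ((t + l) + i) = s3 (i mod n)" for i
    unfolding P_def using chain_append_add[of "\<lambda>i. s3 (i mod n)" w "t + l" i] w(4) s3(2) by simp
  have "pseudo_orbit X f \<delta> (\<lambda>i. s3 (i mod n))"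
    using pseudo_orbit_cycle[OF s3(1) _ assms(4)] s3(2,3) by simp
  then have "pseudo_orbit X f \<delta> P"
    unfolding P_def using pseudo_orbit_append[OF w(1)] w(4) s3(2) by simp
  moreover have "P 0 = a" "P t = b" using w by (simp_all add: P_def)
  moreover have "P (m + t) = P m" if m_ge: "m \<ge> t + l" for m
  proof -
    obtain j where m: "m = (t + l) + j" using m_ge le_Suc_ex by blast
    obtain c where t: "t = n * c" using assms(5) by blast
    have "P (m + t) = s3 ((j + n * c) mod n)" using P_tail[of "j + t"] unfolding m t by (simp add: add.assoc)
    also have "\<dots> = P m" using P_tail[of j] unfolding m by simp
    finally show ?thesis .
  qed
  ultimately show thesis by (rule that)
qed

lemma dist_le_of_shadowing_recurrent:
  assumes "continuous_on X f" "f ` X \<subseteq> X" "z \<in> recurrent_points X f"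
    and shadow: "\<And>i. dist ((f ^^ i) z) (P i) < \<epsilon>" and period: "\<And>m. m \<ge> T \<Longrightarrow> P (m + t) = P m"
  shows "dist (P 0) (P t) < 6 * \<epsilon>"
proof -
  have "z \<in> X" using assms(3) recurrent_points_subset by blast
  have "\<epsilon> > 0" using shadow[of 0] zero_le_dist[of "(f ^^ 0) z" "P 0"] by linarith
  obtain r :: "nat \<Rightarrow> nat" where r: "strict_mono r" "(\<lambda>i. (f ^^ r i) z) \<longlonglongrightarrow> z"
    using assms(3) unfolding recurrent_points_def by blast
  have "(\<lambda>i. (f ^^ t) ((f ^^ r i) z)) \<longlonglongrightarrow> (f ^^ t) z"
    using funpow_image_subset[OF assms(2)] \<open>z \<in> X\<close>
    by (intro continuous_on_tendsto_compose[OF continuous_on_funpow[OF assms(1,2)] r(2) \<open>z \<in> X\<close>]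
        always_eventually) blast
  then have "\<forall>\<^sub>F i in sequentially. dist ((f ^^ t) ((f ^^ r i) z)) ((f ^^ t) z) < \<epsilon>"
    using \<open>\<epsilon> > 0\<close> unfolding tendsto_iff by blast
  moreover have "\<forall>\<^sub>F i in sequentially. dist ((f ^^ r i) z) z < \<epsilon>"
    using r(2) \<open>\<epsilon> > 0\<close> unfolding tendsto_iff by blast
  moreover have "\<forall>\<^sub>F i in sequentially. i \<ge> T" by (rule eventually_ge_at_top)
  ultimately have "\<forall>\<^sub>F i in sequentially. dist ((f ^^ t) ((f ^^ r i) z)) ((f ^^ t) z) < \<epsilon> \<and>
      dist ((f ^^ r i) z) z < \<epsilon> \<and> i \<ge> T"
    by (intro eventually_conj)
  then obtain j where j: "dist ((f ^^ t) ((f ^^ r j) z)) ((f ^^ t) z) < \<epsilon>"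
      "dist ((f ^^ r j) z) z < \<epsilon>" "j \<ge> T"
    unfolding eventually_sequentially by blast
  define m where "m = r j"
  have "m \<ge> T" using j(3) seq_suble[OF r(1), of j] by (simp add: m_def)
  have orbit_shift: "(f ^^ (m + t)) z = (f ^^ t) ((f ^^ m) z)"
    by (simp add: funpow_add add.commute[of m])
  text \<open>Along the shadowing orbit, \<open>P t\<close> is reached from \<open>P 0\<close> through the point \<open>P m = P (m + t)\<close>.\<close>
  have "dist (P 0) (P t) \<le> dist (P 0) z + dist z ((f ^^ m) z) + dist ((f ^^ m) z) (P m)
      + dist (P m) ((f ^^ (m + t)) z) + dist ((f ^^ (m + t)) z) ((f ^^ t) z) + dist ((f ^^ t) z) (P t)"
    using dist_triangle[of "P 0" "P t" z] dist_triangle[of z "P t" "(f ^^ m) z"]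
      dist_triangle[of "(f ^^ m) z" "P t" "P m"] dist_triangle[of "P m" "P t" "(f ^^ (m + t)) z"]
      dist_triangle[of "(f ^^ (m + t)) z" "P t" "(f ^^ t) z"]
    by linarith
  moreover have "dist (P 0) z < \<epsilon>" "dist ((f ^^ m) z) (P m) < \<epsilon>" "dist ((f ^^ t) z) (P t) < \<epsilon>"
    using shadow[of 0] shadow[of m] shadow[of t] by (simp_all add: dist_commute)
  moreover have "dist z ((f ^^ m) z) < \<epsilon>" using j(2) by (simp add: m_def dist_commute)
  moreover have "dist (P m) ((f ^^ (m + t)) z) < \<epsilon>"
    using shadow[of "m + t"] period[OF \<open>m \<ge> T\<close>] by (simp add: dist_commute)
  moreover have "dist ((f ^^ (m + t)) z) ((f ^^ t) z) < \<epsilon>"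
    using j(1) unfolding orbit_shift by (simp add: m_def)
  ultimately show ?thesis by linarith
qed

lemma eventually_periodic_pseudo_orbit_connected:
  assumes "connected C" "C \<subseteq> recurrent_points X f" "f ` X \<subseteq> X" "\<delta> > 0" "a \<in> C" "b \<in> C"
  obtains P t T where "pseudo_orbit X f \<delta> P" "P 0 = a" "P t = b" "\<And>m. m \<ge> T \<Longrightarrow> P (m + t) = P m"
proof -
  obtain n where n: "n \<ge> 1" "chain_between X f \<delta> n a a"
    using chain_between_recurrent_connected[OF assms(1-5,5)] by blast
  obtain t where t: "n dvd t" "chain_between X f \<delta> t a b"
    using chain_between_dvd_recurrent_connected[OF assms(1-6) n(1)] by blast
  obtain l where l: "chain_between X f \<delta> l b a"
    using chain_between_recurrent_connected[OF assms(1-4,6,5)] by blast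
  have "n > 0" using n(1) by simp
  with t(2) l n(2) show thesis using t(1) that by (rule eventually_periodic_pseudo_orbit)
qed

lemma connected_subset_singleton_of_Sh:
  assumes "continuous_on X f" "f ` X \<subseteq> X" "x \<in> Sh X f" "connected C" "x \<in> C" "C \<subseteq> X"
    and "\<Delta> > 0" "nbhd X C \<Delta> \<subseteq> recurrent_points X f"
  shows "C \<subseteq> {x}"
proof
  have near: "y \<in> recurrent_points X f" if "y \<in> X" "c \<in> C" "dist y c < \<Delta>" for y c
    using that assms(8) unfolding nbhd_def by blast
  have "C \<subseteq> recurrent_points X f" using near assms(6,7) by fastforce
  fix p assume "p \<in> C"
  show "p \<in> {x}"
  proof (rule ccontr)
    assume "p \<notin> {x}"
    define \<epsilon> where "\<epsilon> = min \<Delta> (dist x p / 6)"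
    have "\<epsilon> > 0" using assms(7) \<open>p \<notin> {x}\<close> by (simp add: \<epsilon>_def)
    then obtain \<delta> where "\<delta> > 0" and shad: "\<And>xs. pseudo_orbit X f \<delta> xs \<Longrightarrow> xs 0 = x \<Longrightarrow> shadowed X f \<epsilon> xs"
      using assms(3) unfolding Sh_def by blast
    obtain P t T where P: "pseudo_orbit X f \<delta> P" "P 0 = x" "P t = p" "\<And>m. m \<ge> T \<Longrightarrow> P (m + t) = P m"
      using eventually_periodic_pseudo_orbit_connected[OF assms(4) \<open>C \<subseteq> recurrent_points X f\<close>
            assms(2) \<open>\<delta> > 0\<close> assms(5) \<open>p \<in> C\<close>] by blast
    obtain z where "z \<in> X" and shadow: "\<And>i. dist ((f ^^ i) z) (P i) < \<epsilon>"
      using shad[OF P(1,2)] unfolding shadowed_def by blast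
    have "z \<in> recurrent_points X f"
      using near[OF \<open>z \<in> X\<close> assms(5)] shadow[of 0] P(2) by (simp add: \<epsilon>_def)
    then have "dist x p < 6 * \<epsilon>"
      using dist_le_of_shadowing_recurrent[OF assms(1,2) _ shadow P(4)] P(2,3) by simp
    then show False by (simp add: \<epsilon>_def)
  qed
qed

lemma nbhd_mono: "A \<subseteq> B \<Longrightarrow> nbhd X A \<delta> \<subseteq> nbhd X B \<delta>"
  unfolding nbhd_def by blast

lemma connected_component_subset_comp_hull:
  "x \<in> X \<Longrightarrow> x \<in> A \<Longrightarrow> connected_component_set X x \<subseteq> comp_hull X A"
  unfolding comp_hull_def using componentsI connected_component_refl_eq by blast

theorem lemma3p6:
  fixes X :: "'a::metric_space set" and f :: "'a \<Rightarrow> 'a"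
  assumes "compact X" and "continuous_on X f" and "f ` X \<subseteq> X"
    and "\<exists>\<delta>>0. nbhd X (comp_hull X (Sh X f)) \<delta> \<subseteq> recurrent_points X f"
  shows "Sh X f \<subseteq> degenerate_points X"
proof
  fix x assume xS: "x \<in> Sh X f"
  then have "x \<in> X" by (simp add: Sh_def)
  obtain \<Delta> where \<Delta>: "\<Delta> > 0" "nbhd X (comp_hull X (Sh X f)) \<Delta> \<subseteq> recurrent_points X f"
    using assms(4) by blast
  have "nbhd X (connected_component_set X x) \<Delta> \<subseteq> recurrent_points X f"
    using nbhd_mono[OF connected_component_subset_comp_hull[OF \<open>x \<in> X\<close> xS]] \<Delta>(2) by (rule order_trans)
  then have "connected_component_set X x \<subseteq> {x}"
    using connected_subset_singleton_of_Sh[OF assms(2,3) xS connected_connected_component _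
        connected_component_subset \<Delta>(1)] \<open>x \<in> X\<close> by (simp add: connected_component_refl)
  then show "x \<in> degenerate_points X"
    using \<open>x \<in> X\<close> connected_component_refl_eq unfolding degenerate_points_def by blast
qed

end
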